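(* For all $n\ge0$, $$S_n(x)=\sum_{\nu=0}^{n}\binom{n}{\nu}\alpha_{\nu,n-\nu}\,x^{n-\nu},\qquad\text{i.e.}\quad s_{n,\nu}=\binom{n}{\nu}\alpha_{n-\nu,\nu}\ (0\le\nu\le n).$$ If (R) holds, then $S_n(x)=(-1)^nx^nS_n(x^{-1})$ and $s_{n,\nu}=(-1)^ns_{n,n-\nu}$ for $0\le\nu\le n$.
   Context: Let $(\alpha_n)_{n\ge0}$ be an arbitrary sequence of complex numbers with Appell polynomials $A_n(x)=\sum_{\nu=0}^{n}\binom{n}{\nu}\alpha_{n-\nu}x^\nu$. Let $s_{n,k}=\sum_{\nu=k}^{n}\binom{n}{\nu}\binom{\nu}{k}\alpha_\nu$ ($0\le k\le n$), $S_n(x)=\sum_{k=0}^n s_{n,k}x^k$, and $\alpha_{r,s}=\sum_{\nu=0}^{r}\binom{r}{\nu}\alpha_{s+\nu}$ for $r,s\ge0$. Property (R) means $A_n(1-x)=(-1)^nA_n(x)$ for all $n\ge0$. *)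

theory Defs
  imports Complex_Main
begin

definition appell :: "(nat \<Rightarrow> complex) \<Rightarrow> nat \<Rightarrow> complex \<Rightarrow> complex" where
  "appell \<alpha> n x = (\<Sum>\<nu>=0..n. of_nat (n choose \<nu>) * \<alpha> (n - \<nu>) * x ^ \<nu>)"

definition scoef :: "(nat \<Rightarrow> complex) \<Rightarrow> nat \<Rightarrow> nat \<Rightarrow> complex" where
  "scoef \<alpha> n k = (\<Sum>\<nu>=k..n. of_nat (n choose \<nu>) * of_nat (\<nu> choose k) * \<alpha> \<nu>)"

definition Spoly :: "(nat \<Rightarrow> complex) \<Rightarrow> nat \<Rightarrow> complex \<Rightarrow> complex" where
  "Spoly \<alpha> n x = (\<Sum>k=0..n. scoef \<alpha> n k * x ^ k)"

definition alpha2 :: "(nat \<Rightarrow> complex) \<Rightarrow> nat \<Rightarrow> nat \<Rightarrow> complex" where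
  "alpha2 \<alpha> r s = (\<Sum>\<nu>=0..r. of_nat (r choose \<nu>) * \<alpha> (s + \<nu>))"

definition propR :: "(nat \<Rightarrow> complex) \<Rightarrow> bool" where
  "propR \<alpha> \<longleftrightarrow> (\<forall>n x. appell \<alpha> n (1 - x) = (-1) ^ n * appell \<alpha> n x)"

end

theory Submission
  imports Defs
begin

(* Trinomial revision turns s_{n,k} into binom(n,k) alpha_{n-k,k}. Property (R) at x = 0 gives
   alpha_{m,0} = A_m(1) = (-1)^m alpha_m, and the Pascal-type recurrence
   alpha_{r+1,s} = alpha_{r,s} + alpha_{r,s+1} propagates this to the symmetry
   alpha_{r,s} = (-1)^(r+s) alpha_{s,r}, which is exactly the palindromic symmetry of the s_{n,k}. *)

lemma scoef_eq_alpha2: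
  assumes "k \<le> n"
  shows "scoef \<alpha> n k = of_nat (n choose k) * alpha2 \<alpha> (n - k) k"
proof -
  have "scoef \<alpha> n k = (\<Sum>\<nu>=k..n. of_nat (n choose k) * (of_nat ((n - k) choose (\<nu> - k)) * \<alpha> \<nu>))"
    unfolding scoef_def
  proof (rule sum.cong)
    fix \<nu> assume "\<nu> \<in> {k..n}"
    then have "(n choose \<nu>) * (\<nu> choose k) = (n choose k) * ((n - k) choose (\<nu> - k))"
      by (intro choose_mult) auto
    then show "of_nat (n choose \<nu>) * of_nat (\<nu> choose k) * \<alpha> \<nu>
             = of_nat (n choose k) * (of_nat ((n - k) choose (\<nu> - k)) * \<alpha> \<nu>)"
      by (metis mult.assoc of_nat_mult)
  qed simp
  also have "\<dots> = of_nat (n choose k) * (\<Sum>\<nu>=0+k..(n-k)+k. of_nat ((n - k) choose (\<nu> - k)) * \<alpha> \<nu>)"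
    using assms by (simp add: sum_distrib_left)
  also have "\<dots> = of_nat (n choose k) * alpha2 \<alpha> (n - k) k"
    unfolding alpha2_def sum.shift_bounds_cl_nat_ivl by (simp add: add.commute)
  finally show ?thesis .
qed

lemma Spoly_eq_alpha2_sum:
  "Spoly \<alpha> n x = (\<Sum>\<nu>=0..n. of_nat (n choose \<nu>) * alpha2 \<alpha> \<nu> (n - \<nu>) * x ^ (n - \<nu>))"
proof -
  have "Spoly \<alpha> n x = (\<Sum>k=0..n. of_nat (n choose k) * alpha2 \<alpha> (n - k) k * x ^ k)"
    unfolding Spoly_def by (intro sum.cong) (auto simp: scoef_eq_alpha2)
  also have "\<dots> = (\<Sum>\<nu>=0..n. of_nat (n choose (n - \<nu>)) * alpha2 \<alpha> (n - (n - \<nu>)) (n - \<nu>) * x ^ (n - \<nu>))"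
    by (subst sum.atLeastAtMost_rev) simp
  also have "\<dots> = (\<Sum>\<nu>=0..n. of_nat (n choose \<nu>) * alpha2 \<alpha> \<nu> (n - \<nu>) * x ^ (n - \<nu>))"
    by (intro sum.cong) (auto simp: binomial_symmetric[symmetric])
  finally show ?thesis .
qed

lemma alpha2_0_left: "alpha2 \<alpha> 0 s = \<alpha> s"
  by (simp add: alpha2_def)

lemma alpha2_Suc_left:
  "alpha2 \<alpha> (Suc r) s = alpha2 \<alpha> r s + alpha2 \<alpha> r (Suc s)"
proof -
  have split: "alpha2 \<alpha> r' s = \<alpha> s + (\<Sum>i=0..r. of_nat (r' choose Suc i) * \<alpha> (s + Suc i))"
    if "r' = r \<or> r' = Suc r" for r'
  proof -
    have "alpha2 \<alpha> r' s = (\<Sum>i=0..Suc r. of_nat (r' choose i) * \<alpha> (s + i))"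
      using that unfolding alpha2_def by auto
    then show ?thesis by (subst (asm) sum.atLeast0_atMost_Suc_shift) simp
  qed
  have "alpha2 \<alpha> (Suc r) s = alpha2 \<alpha> r s + (\<Sum>i=0..r. of_nat (r choose i) * \<alpha> (Suc s + i))"
    using split[of "Suc r"] split[of r] by (simp add: sum.distrib distrib_right)
  then show ?thesis unfolding alpha2_def by simp
qed

lemma appell_at_0: "appell \<alpha> m 0 = \<alpha> m"
  unfolding appell_def by (simp add: sum.atLeast_Suc_atMost zero_power)

lemma appell_at_1: "appell \<alpha> m 1 = alpha2 \<alpha> m 0"
proof -
  have "appell \<alpha> m 1 = (\<Sum>\<nu>=0..m. of_nat (m choose (m - \<nu>)) * \<alpha> (m - \<nu>))"
    unfolding appell_def by (intro sum.cong) (auto simp: binomial_symmetric[symmetric])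
  also have "\<dots> = alpha2 \<alpha> m 0"
    unfolding alpha2_def by (subst (2) sum.atLeastAtMost_rev) simp
  finally show ?thesis .
qed

lemma propR_alpha2_0_right:
  assumes "propR \<alpha>"
  shows "alpha2 \<alpha> m 0 = (-1) ^ m * \<alpha> m"
  using assms unfolding propR_def
  by (metis appell_at_0 appell_at_1 diff_zero)

lemma propR_alpha2_swap:
  assumes "propR \<alpha>"
  shows "alpha2 \<alpha> r s = (-1) ^ (r + s) * alpha2 \<alpha> s r"
proof (induction r arbitrary: s)
  case 0
  then show ?case by (simp add: alpha2_0_left propR_alpha2_0_right[OF assms])
next
  case (Suc r)
  have "alpha2 \<alpha> (Suc r) s = alpha2 \<alpha> r s + alpha2 \<alpha> r (Suc s)"
    by (rule alpha2_Suc_left)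
  also have "\<dots> = (-1) ^ (r + s) * (alpha2 \<alpha> s r - alpha2 \<alpha> (Suc s) r)"
    using Suc[of s] Suc[of "Suc s"] by (simp add: algebra_simps)
  also have "alpha2 \<alpha> s r - alpha2 \<alpha> (Suc s) r = - alpha2 \<alpha> s (Suc r)"
    using alpha2_Suc_left[of \<alpha> s r] by simp
  finally show ?case by simp
qed

lemma propR_scoef_reflect:
  assumes "propR \<alpha>" and "\<nu> \<le> n"
  shows "scoef \<alpha> n \<nu> = (-1) ^ n * scoef \<alpha> n (n - \<nu>)"
proof -
  have "scoef \<alpha> n \<nu> = of_nat (n choose \<nu>) * alpha2 \<alpha> (n - \<nu>) \<nu>"
    using assms(2) by (rule scoef_eq_alpha2)
  also have "\<dots> = of_nat (n choose (n - \<nu>)) * ((-1) ^ n * alpha2 \<alpha> \<nu> (n - \<nu>))"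
    using propR_alpha2_swap[OF assms(1), of "n - \<nu>" \<nu>] assms(2)
    by (simp add: binomial_symmetric[symmetric])
  also have "\<dots> = (-1) ^ n * scoef \<alpha> n (n - \<nu>)"
    using scoef_eq_alpha2[of "n - \<nu>" n \<alpha>] assms(2) by simp
  finally show ?thesis .
qed

lemma power_mult_sum_inverse_powers:
  fixes x :: "'a :: field"
  assumes "x \<noteq> 0"
  shows "x ^ n * (\<Sum>k=0..n. c k * inverse x ^ k) = (\<Sum>k=0..n. c (n - k) * x ^ k)"
proof -
  have "x ^ n * (\<Sum>k=0..n. c k * inverse x ^ k) = (\<Sum>k=0..n. c k * x ^ (n - k))"
    unfolding sum_distrib_left
  proof (intro sum.cong refl)
    fix k assume "k \<in> {0..n}"
    then have "x ^ n = x ^ (n - k) * x ^ k" by (simp flip: power_add)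
    then show "x ^ n * (c k * inverse x ^ k) = c k * x ^ (n - k)"
      using assms by (simp add: field_simps power_inverse)
  qed
  also have "\<dots> = (\<Sum>k=0..n. c (n - k) * x ^ k)"
    by (subst sum.atLeastAtMost_rev) (intro sum.cong; auto)
  finally show ?thesis .
qed

lemma propR_Spoly_reciprocal:
  assumes "propR \<alpha>" and "x \<noteq> 0"
  shows "Spoly \<alpha> n x = (-1) ^ n * x ^ n * Spoly \<alpha> n (inverse x)"
proof -
  have "x ^ n * Spoly \<alpha> n (inverse x) = (\<Sum>k=0..n. scoef \<alpha> n (n - k) * x ^ k)"
    unfolding Spoly_def using assms(2) by (rule power_mult_sum_inverse_powers)
  also have "\<dots> = (\<Sum>k=0..n. (-1) ^ n * scoef \<alpha> n k * x ^ k)"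
    by (intro sum.cong refl)
      (metis atLeastAtMost_iff diff_diff_cancel diff_le_self propR_scoef_reflect[OF assms(1)])
  finally have "x ^ n * Spoly \<alpha> n (inverse x) = (-1) ^ n * Spoly \<alpha> n x"
    unfolding Spoly_def by (simp add: sum_distrib_left mult.assoc)
  then show ?thesis by (simp flip: power_add add: mult.assoc power_mult_distrib)
qed

theorem mainTheorem9:
  fixes \<alpha> :: "nat \<Rightarrow> complex"
  shows "(\<forall>n x. Spoly \<alpha> n x = (\<Sum>\<nu>=0..n. of_nat (n choose \<nu>) * alpha2 \<alpha> \<nu> (n - \<nu>) * x ^ (n - \<nu>)))
       \<and> (\<forall>n \<nu>. \<nu> \<le> n \<longrightarrow> scoef \<alpha> n \<nu> = of_nat (n choose \<nu>) * alpha2 \<alpha> (n - \<nu>) \<nu>)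
       \<and> (propR \<alpha> \<longrightarrow>
            (\<forall>n x. x \<noteq> 0 \<longrightarrow> Spoly \<alpha> n x = (-1) ^ n * x ^ n * Spoly \<alpha> n (inverse x))
          \<and> (\<forall>n \<nu>. \<nu> \<le> n \<longrightarrow> scoef \<alpha> n \<nu> = (-1) ^ n * scoef \<alpha> n (n - \<nu>)))"
  by (intro conjI allI impI Spoly_eq_alpha2_sum scoef_eq_alpha2 propR_Spoly_reciprocal
      propR_scoef_reflect)

end
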